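(* For each equivalence class of the relation $\alpha\sim\gamma\iff\mathsf{rajcode}(\alpha)=\mathsf{rajcode}(\gamma)$ on weak compositions, there is a unique snowy $\alpha$ in the class. Moreover, if $\gamma\sim\alpha$ and $\alpha$ is snowy, then $\gamma_r\ge\alpha_r$ for all $r$.
   Context: A weak composition is an infinite sequence of nonnegative integers with finitely many positive entries; it is snowy if its positive entries are distinct. $D(\alpha)=\{(r,c):1\le c\le\alpha_r\}$ ($(r,c)$ in row $r$, row 1 on top, column $c$). For a diagram $D$, $\mathsf{snow}(D)$ is built by iterating through rows from bottom to top: in row $r$ take the rightmost cell $(r,c)\in D$ such that column $c$ contains no dark cloud yet; if it exists label it a dark cloud and add snowflake cells at $(r',c)$ for all $r'<r$ with $(r',c)\notin D$. $\mathsf{rajcode}(\alpha)$ is the weak composition whose $i$-th entry is the number of cells of $\mathsf{snow}(D(\alpha))$ in row $i$. *)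

theory Defs
  imports Main
begin

text \<open>Weak compositions: sequences nat => nat with finite support.
  Row index 0 is the top row (the paper's row 1); columns are 1-based.\<close>

definition weak_comp :: "(nat \<Rightarrow> nat) \<Rightarrow> bool" where
  "weak_comp \<alpha> \<longleftrightarrow> finite {r. \<alpha> r \<noteq> 0}"

definition snowy :: "(nat \<Rightarrow> nat) \<Rightarrow> bool" where
  "snowy \<alpha> \<longleftrightarrow> (\<forall>i j. i \<noteq> j \<longrightarrow> 0 < \<alpha> i \<longrightarrow> 0 < \<alpha> j \<longrightarrow> \<alpha> i \<noteq> \<alpha> j)"

definition diagram :: "(nat \<Rightarrow> nat) \<Rightarrow> (nat \<times> nat) set" where
  "diagram \<alpha> = {(r, c). 1 \<le> c \<and> c \<le> \<alpha> r}"

definition dark_in_row :: "(nat \<times> nat) set \<Rightarrow> nat set \<Rightarrow> nat \<Rightarrow> nat option" where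
  "dark_in_row D C r =
     (if {c. (r, c) \<in> D \<and> c \<notin> C} = {} then None
      else Some (Max {c. (r, c) \<in> D \<and> c \<notin> C}))"

text \<open>cloud_cols D r k: columns containing dark clouds after processing rows
  r+k-1, r+k-2, ..., r (bottom to top).\<close>
fun cloud_cols :: "(nat \<times> nat) set \<Rightarrow> nat \<Rightarrow> nat \<Rightarrow> nat set" where
  "cloud_cols D r 0 = {}"
| "cloud_cols D r (Suc k) =
     (let C = cloud_cols D (Suc r) k in
      case dark_in_row D C r of None \<Rightarrow> C | Some c \<Rightarrow> insert c C)"

definition row_bound :: "(nat \<times> nat) set \<Rightarrow> nat" where
  "row_bound D = (if D = {} then 0 else Suc (Max (fst ` D)))"

text \<open>Column of the dark cloud in row r (processing all nonempty rows below r first).\<close>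
definition dark_col :: "(nat \<times> nat) set \<Rightarrow> nat \<Rightarrow> nat option" where
  "dark_col D r = dark_in_row D (cloud_cols D (Suc r) (row_bound D)) r"

definition snow :: "(nat \<times> nat) set \<Rightarrow> (nat \<times> nat) set" where
  "snow D = D \<union> {(r', c). (\<exists>r. r' < r \<and> dark_col D r = Some c) \<and> (r', c) \<notin> D}"

definition rajcode :: "(nat \<Rightarrow> nat) \<Rightarrow> nat \<Rightarrow> nat" where
  "rajcode \<alpha> i = card {c. (i, c) \<in> snow (diagram \<alpha>)}"

end

theory Submission
  imports Defs
begin

text \<open>Record, for each row of \<open>D(\<gamma>)\<close>, the column of its dark cloud (0 if there is none); call
  the result \<open>\<beta> = cloud_comp \<gamma>\<close>. Distinct rows get distinct dark-cloud columns, so \<open>\<beta>\<close> is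
  snowy, and \<open>\<beta> \<le> \<gamma>\<close>. Row \<open>i\<close> of \<open>snow(D(\<gamma>))\<close> is \<open>{1..\<gamma>\<^sub>i}\<close> together with the set \<open>K\<^sub>i\<close>
  (\<open>clouds_below\<close>) of columns of dark clouds below row \<open>i\<close>. For a snowy composition the dark
  cloud of a nonempty row sits at its end, so \<open>D(\<beta>)\<close> has the same dark clouds as \<open>D(\<gamma>)\<close>; and
  every column of row \<open>i\<close> to the right of its dark cloud already lies in \<open>K\<^sub>i\<close>. Hence
  \<open>{1..\<beta>\<^sub>i} \<union> K\<^sub>i = {1..\<gamma>\<^sub>i} \<union> K\<^sub>i\<close>, i.e. \<open>\<beta> \<sim> \<gamma>\<close>.
  Conversely two snowy compositions with equal rajcode agree, by downward induction on the row:
  if they agree below row \<open>i\<close> they have the same \<open>K\<^sub>i\<close>, neither of their \<open>i\<close>-th entries lies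
  in \<open>K\<^sub>i\<close>, and \<open>x \<mapsto> |{1..x} \<union> K\<^sub>i|\<close> is strictly increasing on the complement of \<open>K\<^sub>i\<close>.\<close>

lemma bounded_downward_induct [case_names beyond step]:
  fixes B :: nat
  assumes "\<And>r. B \<le> r \<Longrightarrow> P r"
    and "\<And>r. r < B \<Longrightarrow> (\<And>r'. r < r' \<Longrightarrow> P r') \<Longrightarrow> P r"
  shows "P r"
proof (induction "B - r" arbitrary: r rule: less_induct)
  case less
  show ?case
  proof (cases "B \<le> r")
    case True
    then show ?thesis by (rule assms(1))
  next
    case False
    then have "r < B" by simp
    then show ?thesis
    proof (rule assms(2))
      fix r' assume "r < r'"
      then have "B - r' < B - r" using \<open>r < B\<close> by simp
      then show "P r'" by (rule less)
    qed
  qed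
qed

definition clouds_below :: "(nat \<times> nat) set \<Rightarrow> nat \<Rightarrow> nat set" where
  "clouds_below D r = {c. \<exists>r'>r. dark_col D r' = Some c}"

lemma row_snow: "{c. (r, c) \<in> snow D} = {c. (r, c) \<in> D} \<union> clouds_below D r"
  unfolding snow_def clouds_below_def by auto

lemma dark_in_row_SomeD:
  assumes "finite D" "dark_in_row D C r = Some c"
  shows "(r, c) \<in> D" "c \<notin> C" "\<And>c'. c < c' \<Longrightarrow> (r, c') \<in> D \<Longrightarrow> c' \<in> C"
proof -
  let ?A = "{c. (r, c) \<in> D \<and> c \<notin> C}"
  have fin: "finite ?A"
    using finite_imageI[OF assms(1), of snd] by (rule finite_subset[rotated]) force
  have ne: "?A \<noteq> {}" and c: "c = Max ?A"
    using assms(2) unfolding dark_in_row_def by (auto split: if_splits)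
  have "c \<in> ?A"
    using Max_in[OF fin ne] c by simp
  moreover have "c' \<le> c" if "c' \<in> ?A" for c'
    using Max_ge[OF fin that] c by simp
  ultimately show "(r, c) \<in> D" "c \<notin> C" "\<And>c'. c < c' \<Longrightarrow> (r, c') \<in> D \<Longrightarrow> c' \<in> C"
    by force+
qed

lemma dark_in_row_NoneD: "dark_in_row D C r = None \<Longrightarrow> (r, c) \<in> D \<Longrightarrow> c \<in> C"
  unfolding dark_in_row_def by (auto split: if_splits)

lemma dark_in_row_eq_SomeI:
  assumes "finite D" "(r, c) \<in> D" "c \<notin> C" "\<And>c'. c < c' \<Longrightarrow> (r, c') \<in> D \<Longrightarrow> c' \<in> C"
  shows "dark_in_row D C r = Some c"
proof -
  have "finite {c. (r, c) \<in> D \<and> c \<notin> C}"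
    using finite_imageI[OF assms(1), of snd] by (rule finite_subset[rotated]) force
  then show ?thesis
    unfolding dark_in_row_def using assms(2-4) by (auto intro!: Max_eqI leI)
qed

lemma less_row_bound:
  assumes "finite D" "(r, c) \<in> D"
  shows "r < row_bound D"
proof -
  have "r \<le> Max (fst ` D)"
    using assms by (metis Max_ge finite_imageI fst_conv image_eqI)
  then show ?thesis
    unfolding row_bound_def using assms(2) by auto
qed

lemma dark_in_row_beyond_row_bound:
  "finite D \<Longrightarrow> row_bound D \<le> r \<Longrightarrow> dark_in_row D C r = None"
  unfolding dark_in_row_def using less_row_bound by fastforce

lemma dark_col_beyond_row_bound: "finite D \<Longrightarrow> row_bound D \<le> r \<Longrightarrow> dark_col D r = None"
  unfolding dark_col_def by (rule dark_in_row_beyond_row_bound)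

lemma clouds_below_cong:
  assumes "\<And>r. i < r \<Longrightarrow> dark_col D' r = dark_col D r"
  shows "clouds_below D' i = clouds_below D i"
  unfolding clouds_below_def using assms by auto

lemma clouds_below_Suc:
  "clouds_below D r = set_option (dark_col D (Suc r)) \<union> clouds_below D (Suc r)"
  unfolding clouds_below_def by (auto dest: Suc_lessI Suc_lessD)

lemma cloud_cols_Suc_stable:
  assumes "finite D" "row_bound D \<le> r + k"
  shows "cloud_cols D r (Suc k) = cloud_cols D r k"
  using assms(2)
proof (induction k arbitrary: r)
  case 0
  then show ?case by (simp add: dark_in_row_beyond_row_bound[OF assms(1)])
next
  case (Suc k)
  then have "cloud_cols D (Suc r) (Suc k) = cloud_cols D (Suc r) k" by simp
  then show ?case by (simp only: cloud_cols.simps)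
qed

lemma cloud_cols_row_bound:
  assumes "finite D"
  shows "cloud_cols D (Suc r) (row_bound D) = clouds_below D r"
proof (induction r rule: bounded_downward_induct[where B = "row_bound D"])
  case (beyond r)
  have "cloud_cols D (Suc r) k = {}" for k
    using beyond by (induction k arbitrary: r) (simp_all add: dark_in_row_beyond_row_bound[OF assms])
  moreover have "clouds_below D r = {}"
    using beyond dark_col_beyond_row_bound[OF assms] unfolding clouds_below_def by force
  ultimately show ?case by simp
next
  case (step r)
  let ?B = "row_bound D"
  have IH: "cloud_cols D (Suc (Suc r)) ?B = clouds_below D (Suc r)"
    using step by simp
  have "cloud_cols D (Suc r) ?B = cloud_cols D (Suc r) (Suc ?B)"
    using cloud_cols_Suc_stable[OF assms] by simp
  also have "\<dots> = (case dark_col D (Suc r) of None \<Rightarrow> clouds_below D (Suc r)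
                    | Some c \<Rightarrow> insert c (clouds_below D (Suc r)))"
    by (simp add: dark_col_def IH Let_def)
  also have "\<dots> = clouds_below D r"
    by (subst (2) clouds_below_Suc) (auto split: option.split)
  finally show ?case .
qed

lemma dark_col_eq_dark_in_row: "finite D \<Longrightarrow> dark_col D r = dark_in_row D (clouds_below D r) r"
  unfolding dark_col_def by (simp add: cloud_cols_row_bound)

lemma
  assumes "finite D" "dark_col D r = Some c"
  shows dark_col_in: "(r, c) \<in> D"
    and dark_col_notin_clouds_below: "c \<notin> clouds_below D r"
    and clouds_below_right_of_dark_col: "\<And>c'. c < c' \<Longrightarrow> (r, c') \<in> D \<Longrightarrow> c' \<in> clouds_below D r"
  using dark_in_row_SomeD[OF assms(1) assms(2)[unfolded dark_col_eq_dark_in_row[OF assms(1)]]] by blast+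

lemma clouds_below_dark_col_None:
  "finite D \<Longrightarrow> dark_col D r = None \<Longrightarrow> (r, c) \<in> D \<Longrightarrow> c \<in> clouds_below D r"
  by (simp add: dark_col_eq_dark_in_row dark_in_row_NoneD)

lemma dark_col_inj:
  assumes "finite D" "dark_col D i = Some c" "dark_col D j = Some c"
  shows "i = j"
proof -
  have False if "k < l" "dark_col D k = Some c" "dark_col D l = Some c" for k l
  proof -
    have "c \<in> clouds_below D k"
      using that unfolding clouds_below_def by blast
    with dark_col_notin_clouds_below[OF assms(1) that(2)] show False by contradiction
  qed
  then show ?thesis
    using assms(2,3) by (metis linorder_neqE_nat)
qed

lemma clouds_below_subset:
  assumes "finite D"
  shows "clouds_below D r \<subseteq> snd ` D"
proof
  fix c assume "c \<in> clouds_below D r"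
  then obtain r' where "dark_col D r' = Some c"
    unfolding clouds_below_def by blast
  then have "(r', c) \<in> D"
    by (rule dark_col_in[OF assms])
  then show "c \<in> snd ` D"
    by (rule image_eqI[rotated]) simp
qed

lemma finite_clouds_below:
  assumes "finite D"
  shows "finite (clouds_below D r)"
  using clouds_below_subset[OF assms] finite_imageI[OF assms] by (rule finite_subset)

lemma mem_diagram [simp]: "(r, c) \<in> diagram g \<longleftrightarrow> 1 \<le> c \<and> c \<le> g r"
  unfolding diagram_def by simp

lemma finite_diagram:
  assumes "weak_comp g"
  shows "finite (diagram g)"
proof -
  have "diagram g = (SIGMA r:{r. g r \<noteq> 0}. {1..g r})"
    by auto
  then show ?thesis
    using assms unfolding weak_comp_def by simp
qed

lemma zero_beyond_row_bound:
  assumes "weak_comp g" "row_bound (diagram g) \<le> r"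
  shows "g r = 0"
proof (rule ccontr)
  assume "g r \<noteq> 0"
  then have "(r, 1) \<in> diagram g"
    by simp
  then show False
    using less_row_bound[OF finite_diagram[OF assms(1)]] assms(2) by fastforce
qed

lemma clouds_below_diagram_pos: "weak_comp g \<Longrightarrow> c \<in> clouds_below (diagram g) r \<Longrightarrow> 1 \<le> c"
  using clouds_below_subset[OF finite_diagram] by fastforce

lemma rajcode_eq_card: "rajcode g i = card ({1..g i} \<union> clouds_below (diagram g) i)"
proof -
  have "{c. (i, c) \<in> diagram g} = {1..g i}"
    by auto
  then show ?thesis
    by (simp add: rajcode_def row_snow)
qed

definition cloud_comp :: "(nat \<Rightarrow> nat) \<Rightarrow> nat \<Rightarrow> nat" where
  "cloud_comp g r = (case dark_col (diagram g) r of None \<Rightarrow> 0 | Some c \<Rightarrow> c)"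

lemma cloud_comp_le:
  assumes "weak_comp g"
  shows "cloud_comp g r \<le> g r"
  unfolding cloud_comp_def using dark_col_in[OF finite_diagram[OF assms], of r]
  by (cases "dark_col (diagram g) r") auto

lemma cloud_comp_eq_0_iff:
  assumes "weak_comp g"
  shows "cloud_comp g r = 0 \<longleftrightarrow> dark_col (diagram g) r = None"
  unfolding cloud_comp_def using dark_col_in[OF finite_diagram[OF assms], of r]
  by (cases "dark_col (diagram g) r") auto

lemma weak_comp_cloud_comp:
  assumes "weak_comp g"
  shows "weak_comp (cloud_comp g)"
proof -
  have "{r. cloud_comp g r \<noteq> 0} \<subseteq> {r. g r \<noteq> 0}"
  proof (rule Collect_mono)
    show "cloud_comp g r \<noteq> 0 \<longrightarrow> g r \<noteq> 0" for r
      using cloud_comp_le[OF assms, of r] by simp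
  qed
  then show ?thesis
    using assms unfolding weak_comp_def by (rule finite_subset)
qed

lemma snowy_cloud_comp:
  assumes "weak_comp g"
  shows "snowy (cloud_comp g)"
  unfolding snowy_def
proof (intro allI impI)
  fix i j assume "i \<noteq> j" "0 < cloud_comp g i" "0 < cloud_comp g j"
  then have "dark_col (diagram g) i \<noteq> None" "dark_col (diagram g) j \<noteq> None"
    unfolding cloud_comp_eq_0_iff[OF assms, symmetric] by simp_all
  then obtain ci cj where "dark_col (diagram g) i = Some ci" "dark_col (diagram g) j = Some cj"
    by blast
  then show "cloud_comp g i \<noteq> cloud_comp g j"
    using dark_col_inj[OF finite_diagram[OF assms]] \<open>i \<noteq> j\<close> by (auto simp: cloud_comp_def)
qed

lemma snowy_eqD: "snowy a \<Longrightarrow> a i = a j \<Longrightarrow> a i \<noteq> 0 \<Longrightarrow> i = j"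
  unfolding snowy_def by (metis neq0_conv)

lemma dark_col_snowy:
  assumes "weak_comp a" "snowy a"
  shows "dark_col (diagram a) r = (if a r = 0 then None else Some (a r))"
proof (induction r rule: bounded_downward_induct[where B = "row_bound (diagram a)"])
  case (beyond r)
  then show ?case
    using zero_beyond_row_bound[OF assms(1)] dark_col_beyond_row_bound[OF finite_diagram[OF assms(1)]]
    by simp
next
  case (step r)
  show ?case
  proof (cases "a r = 0")
    case True
    then show ?thesis
      using dark_col_in[OF finite_diagram[OF assms(1)], of r] by (cases "dark_col (diagram a) r") auto
  next
    case False
    have "a r \<notin> clouds_below (diagram a) r"
    proof
      assume "a r \<in> clouds_below (diagram a) r"
      then obtain r' where "r < r'" "dark_col (diagram a) r' = Some (a r)"
        unfolding clouds_below_def by blast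
      then have "a r' = a r"
        using step(2)[of r'] by (auto split: if_splits)
      then show False
        using snowy_eqD[OF assms(2)] False \<open>r < r'\<close> by force
    qed
    then show ?thesis
      using False unfolding dark_col_eq_dark_in_row[OF finite_diagram[OF assms(1)]]
      by (auto intro!: dark_in_row_eq_SomeI finite_diagram assms(1))
  qed
qed

lemma dark_col_cloud_comp:
  assumes "weak_comp g"
  shows "dark_col (diagram (cloud_comp g)) = dark_col (diagram g)"
proof
  fix r
  show "dark_col (diagram (cloud_comp g)) r = dark_col (diagram g) r"
    using dark_col_snowy[OF weak_comp_cloud_comp[OF assms] snowy_cloud_comp[OF assms], of r]
      cloud_comp_eq_0_iff[OF assms, of r]
    by (cases "dark_col (diagram g) r") (auto simp: cloud_comp_def)
qed

lemma rajcode_cloud_comp: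
  assumes "weak_comp g"
  shows "rajcode (cloud_comp g) = rajcode g"
proof
  fix i
  let ?K = "clouds_below (diagram g) i"
  have K: "clouds_below (diagram (cloud_comp g)) i = ?K"
    unfolding clouds_below_def dark_col_cloud_comp[OF assms] ..
  have "{cloud_comp g i<..g i} \<subseteq> ?K"
    using clouds_below_right_of_dark_col clouds_below_dark_col_None finite_diagram[OF assms]
    unfolding cloud_comp_def by (fastforce split: option.splits)
  moreover have "{1..g i} \<subseteq> {1..cloud_comp g i} \<union> {cloud_comp g i<..g i}"
    by auto
  ultimately have "{1..cloud_comp g i} \<union> ?K = {1..g i} \<union> ?K"
    using cloud_comp_le[OF assms, of i] by auto
  then show "rajcode (cloud_comp g) i = rajcode g i"
    by (simp add: rajcode_eq_card K)
qed

lemma snowy_notin_clouds_below: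
  assumes "weak_comp a" "snowy a"
  shows "a i \<notin> clouds_below (diagram a) i"
proof (cases "a i = 0")
  case True
  then show ?thesis
    using clouds_below_diagram_pos[OF assms(1)] by force
next
  case False
  then show ?thesis
    using dark_col_notin_clouds_below[OF finite_diagram[OF assms(1)]] dark_col_snowy[OF assms, of i]
    by simp
qed

lemma card_atLeastAtMost_Un_strict_mono:
  fixes x y :: nat
  assumes "finite T" "x < y" "y \<notin> T"
  shows "card ({1..x} \<union> T) < card ({1..y} \<union> T)"
proof (rule psubset_card_mono)
  show "finite ({1..y} \<union> T)"
    using assms(1) by simp
  have "y \<in> ({1..y} \<union> T) - ({1..x} \<union> T)"
    using assms(2,3) by auto
  moreover have "{1..x} \<union> T \<subseteq> {1..y} \<union> T"
    using assms(2) by auto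
  ultimately show "{1..x} \<union> T \<subset> {1..y} \<union> T"
    by blast
qed

lemma snowy_rajcode_inj:
  assumes "weak_comp a" "weak_comp a'" "snowy a" "snowy a'" "rajcode a = rajcode a'"
  shows "a = a'"
proof
  fix i
  let ?B = "max (row_bound (diagram a)) (row_bound (diagram a'))"
  show "a i = a' i"
  proof (induction i rule: bounded_downward_induct[where B = ?B])
    case (beyond i)
    then show ?case
      using zero_beyond_row_bound[OF assms(1)] zero_beyond_row_bound[OF assms(2)] by simp
  next
    case (step i)
    let ?K = "clouds_below (diagram a) i"
    have "dark_col (diagram a') r = dark_col (diagram a) r" if "i < r" for r
      using step(2)[OF that] by (simp add: dark_col_snowy assms(1-4))
    then have K: "clouds_below (diagram a') i = ?K"
      by (rule clouds_below_cong)
    have fin: "finite ?K"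
      by (rule finite_clouds_below[OF finite_diagram[OF assms(1)]])
    have card_eq: "card ({1..a i} \<union> ?K) = card ({1..a' i} \<union> ?K)"
      using fun_cong[OF assms(5), of i] by (simp add: rajcode_eq_card K)
    have notin: "a i \<notin> ?K" "a' i \<notin> ?K"
      using snowy_notin_clouds_below[OF assms(1,3)] snowy_notin_clouds_below[OF assms(2,4)] K
      by auto
    show ?case
    proof (rule linorder_cases)
      assume "a i < a' i"
      from card_atLeastAtMost_Un_strict_mono[OF fin this notin(2)] show ?case
        using card_eq by simp
    next
      assume "a' i < a i"
      from card_atLeastAtMost_Un_strict_mono[OF fin this notin(1)] show ?case
        using card_eq by simp
    qed
  qed
qed

lemma snowy_eq_cloud_comp:
  assumes "weak_comp \<gamma>" "weak_comp \<alpha>" "snowy \<alpha>" "rajcode \<alpha> = rajcode \<gamma>"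
  shows "\<alpha> = cloud_comp \<gamma>"
proof (rule snowy_rajcode_inj)
  show "rajcode \<alpha> = rajcode (cloud_comp \<gamma>)"
    using assms(4) rajcode_cloud_comp[OF assms(1)] by simp
qed (use assms weak_comp_cloud_comp snowy_cloud_comp in auto)

theorem lemma4p5:
  shows "(\<forall>\<gamma>. weak_comp \<gamma> \<longrightarrow>
            (\<exists>!\<alpha>. weak_comp \<alpha> \<and> snowy \<alpha> \<and> rajcode \<alpha> = rajcode \<gamma>))
       \<and> (\<forall>\<alpha> \<gamma>. weak_comp \<alpha> \<longrightarrow> weak_comp \<gamma> \<longrightarrow> snowy \<alpha> \<longrightarrow>
            rajcode \<gamma> = rajcode \<alpha> \<longrightarrow> (\<forall>r. \<gamma> r \<ge> \<alpha> r))"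
proof (intro conjI allI impI)
  fix \<gamma> :: "nat \<Rightarrow> nat"
  assume \<gamma>: "weak_comp \<gamma>"
  show "\<exists>!\<alpha>. weak_comp \<alpha> \<and> snowy \<alpha> \<and> rajcode \<alpha> = rajcode \<gamma>"
  proof (rule ex1I)
    show "weak_comp (cloud_comp \<gamma>) \<and> snowy (cloud_comp \<gamma>) \<and> rajcode (cloud_comp \<gamma>) = rajcode \<gamma>"
      using weak_comp_cloud_comp[OF \<gamma>] snowy_cloud_comp[OF \<gamma>] rajcode_cloud_comp[OF \<gamma>] by blast
  qed (use snowy_eq_cloud_comp[OF \<gamma>] in blast)
next
  fix \<alpha> \<gamma> :: "nat \<Rightarrow> nat" and r
  assume "weak_comp \<alpha>" "weak_comp \<gamma>" "snowy \<alpha>" "rajcode \<gamma> = rajcode \<alpha>"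
  then have "\<alpha> = cloud_comp \<gamma>"
    by (intro snowy_eq_cloud_comp) simp_all
  then show "\<gamma> r \<ge> \<alpha> r"
    using cloud_comp_le[OF \<open>weak_comp \<gamma>\<close>] by simp
qed

end
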